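(* Let $Q\subset\mathrm{EX}(M)$ and let $(\alpha,U),(\beta,V)\in S_Q$. Set $D_\alpha=(q|_{N_{(\alpha,U)}})^{-1}\big(q(N_{(\alpha,U)})\cap q(N_{(\beta,V)})\big)\subset N_{(\alpha,U)}$ and $D_\beta=(q|_{N_{(\beta,V)}})^{-1}\big(q(N_{(\alpha,U)})\cap q(N_{(\beta,V)})\big)\subset N_{(\beta,V)}$. Then the map $\overline{\beta\circ\alpha^{-1}}:D_\alpha\to D_\beta$, $\overline{\beta\circ\alpha^{-1}}(x)=(q|_{N_{(\beta,V)}})^{-1}\circ q|_{N_{(\alpha,U)}}(x)$, is a well-defined homeomorphism; $\alpha(\mathrm{dom}(\alpha)\cap\mathrm{dom}(\beta))\subset D_\alpha$ and $\overline{\beta\circ\alpha^{-1}}$ restricted to $\alpha(\mathrm{dom}(\alpha)\cap\mathrm{dom}(\beta))$ equals $\beta\circ\alpha^{-1}$; and for $x\in N_{(\alpha,U)}$, $y\in N_{(\beta,V)}$ one has $\overline{\beta\circ\alpha^{-1}}(x)=y$ if and only if $q(x)=q(y)$, i.e. iff either $\beta\circ\alpha^{-1}(x)=y$ or $(\alpha,U,\{x\})\equiv(\beta,V,\{y\})$.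
   Context: Conventions: $M$ is an $n$-dimensional smooth manifold (Hausdorff, second countable) with maximal $C^\infty$ atlas $\mathcal{A}(M)$; every chart $\alpha$ has open domain $\mathrm{dom}(\alpha)\subset M$ and open range $\mathrm{ran}(\alpha)\subset\mathbb{R}^n$. For $A\subset\mathbb{R}^n$, $\partial A$ is its boundary in $\mathbb{R}^n$; for $A\subset U\subset\mathbb{R}^n$, $\partial_U A$ is the boundary of $A$ relative to $U$. An admissible boundary point of $\alpha$ is a $p\in\partial\,\mathrm{ran}(\alpha)$ such that every sequence $(x_i)\subset\mathrm{dom}(\alpha)$ with $\alpha(x_i)\to p$ has no accumulation point in $M$; $B(\alpha)$ is the set of these. An extension is a pair $(\alpha,U)$, $U\subset\mathbb{R}^n$ open, $\mathrm{ran}(\alpha)\subset U$, $\emptyset\ne\partial_U\mathrm{ran}(\alpha)\subset B(\alpha)$; $\mathrm{EX}(M)$ is the set of extensions. A boundary set is $(\alpha,U,V)$ with $(\alpha,U)\in\mathrm{EX}(M)$, $V\subset B(\alpha)\cap U$ (a boundary point if $V=\{p\}$). $(\alpha,U,V)$ covers $(\beta,X,Y)$ if for every sequence $(y_i)\subset\mathrm{dom}(\beta)$ with $(\beta(y_i))$ having an accumulation point in $Y$ there is a subsequence $(v_i)\subset\mathrm{dom}(\alpha)$ of $(y_i)$ with $(\alpha(v_i))$ having an accumulation point in $V$; they are equivalent, $\equiv$, if each covers the other. Completion: for $Q\subset\mathrm{EX}(M)$ let $P=\{(\alpha,\mathrm{ran}(\alpha)):\alpha\in\mathcal{A}(M)\}$,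 $S_Q=P\cup Q$, $N_{(\alpha,U)}=\mathrm{ran}(\alpha)\cup\partial_U\mathrm{ran}(\alpha)$ with subspace topology of $\mathbb{R}^n$, $N_Q=\bigsqcup_{(\alpha,U)\in S_Q}N_{(\alpha,U)}$ with disjoint-union topology. Identify $x\in N_{(\alpha,U)}$ with $y\in N_{(\beta,X)}$ iff either $x\in\mathrm{ran}(\alpha)$, $y\in\mathrm{ran}(\beta)$, $\beta\circ\alpha^{-1}(x)=y$, or $x\in\partial_U\mathrm{ran}(\alpha)$, $y\in\partial_X\mathrm{ran}(\beta)$, $(\alpha,U,\{x\})\equiv(\beta,X,\{y\})$. $Q(M)$ is the quotient space and $q:N_Q\to Q(M)$ the quotient map. *)

theory Defs
  imports "HOL-Analysis.Analysis"
begin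

text \<open>Smooth manifolds: the manifold M is the whole type 'm (Hausdorff, second countable);
  a chart is a partial map 'm to real^'n (n = CARD('n)), represented as a map
  'm => (real^'n) option, so dom and ran are Map.dom and Map.ran.\<close>

type_synonym ('m, 'n) chart = "'m \<Rightarrow> (real ^ 'n) option"

definition chart_fun :: "('m, 'n) chart \<Rightarrow> 'm \<Rightarrow> real ^ 'n" where
  "chart_fun \<alpha> x = the (\<alpha> x)"

definition chart_inv :: "('m, 'n) chart \<Rightarrow> real ^ 'n \<Rightarrow> 'm" where
  "chart_inv \<alpha> = inv_into (dom \<alpha>) (chart_fun \<alpha>)"

definition is_chart :: "('m::topological_space, 'n::finite) chart \<Rightarrow> bool" where
  "is_chart \<alpha> \<longleftrightarrow> open (dom \<alpha>) \<and> open (ran \<alpha>) \<and>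
     (\<exists>g. homeomorphism (dom \<alpha>) (ran \<alpha>) (chart_fun \<alpha>) g)"

text \<open>Iterated directional derivatives; smoothness (C-infinity) on an open set means all of
  them exist and are differentiable.\<close>

fun iter_dderiv :: "('a::real_normed_vector \<Rightarrow> 'b::real_normed_vector) \<Rightarrow> 'a list \<Rightarrow> 'a \<Rightarrow> 'b" where
  "iter_dderiv f [] = f"
| "iter_dderiv f (v # vs) = (\<lambda>x. frechet_derivative (iter_dderiv f vs) (at x) v)"

definition smooth_on :: "'a::real_normed_vector set \<Rightarrow> ('a \<Rightarrow> 'b::real_normed_vector) \<Rightarrow> bool" where
  "smooth_on S f \<longleftrightarrow> (\<forall>vs. iter_dderiv f vs differentiable_on S)"

definition transition :: "('m, 'n) chart \<Rightarrow> ('m, 'n) chart \<Rightarrow> real ^ 'n \<Rightarrow> real ^ 'n" where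
  "transition \<alpha> \<beta> = chart_fun \<beta> \<circ> chart_inv \<alpha>"

definition overlap_img :: "('m, 'n) chart \<Rightarrow> ('m, 'n) chart \<Rightarrow> (real ^ 'n) set" where
  "overlap_img \<alpha> \<beta> = chart_fun \<alpha> ` (dom \<alpha> \<inter> dom \<beta>)"

definition smoothly_compatible :: "('m::topological_space, 'n::finite) chart \<Rightarrow> ('m, 'n) chart \<Rightarrow> bool" where
  "smoothly_compatible \<alpha> \<beta> \<longleftrightarrow>
     smooth_on (overlap_img \<alpha> \<beta>) (transition \<alpha> \<beta>) \<and>
     smooth_on (overlap_img \<beta> \<alpha>) (transition \<beta> \<alpha>)"

definition maximal_smooth_atlas :: "('m::topological_space, 'n::finite) chart set \<Rightarrow> bool" where
  "maximal_smooth_atlas A \<longleftrightarrow>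
     (\<forall>\<alpha>\<in>A. is_chart \<alpha>) \<and> (\<Union>\<alpha>\<in>A. dom \<alpha>) = UNIV \<and>
     (\<forall>\<alpha>\<in>A. \<forall>\<beta>\<in>A. smoothly_compatible \<alpha> \<beta>) \<and>
     (\<forall>\<alpha>. is_chart \<alpha> \<and> (\<forall>\<beta>\<in>A. smoothly_compatible \<alpha> \<beta>) \<longrightarrow> \<alpha> \<in> A)"

definition acc_point :: "(nat \<Rightarrow> 'a::topological_space) \<Rightarrow> 'a \<Rightarrow> bool" where
  "acc_point s p \<longleftrightarrow> (\<forall>S. open S \<longrightarrow> p \<in> S \<longrightarrow> (\<exists>\<^sub>F i in sequentially. s i \<in> S))"

definition adm_boundary :: "('m::topological_space, 'n::finite) chart \<Rightarrow> (real ^ 'n) set" where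
  "adm_boundary \<alpha> = {p \<in> frontier (ran \<alpha>).
     \<forall>x. (\<forall>i. x i \<in> dom \<alpha>) \<and> ((\<lambda>i. chart_fun \<alpha> (x i)) \<longlonglongrightarrow> p) \<longrightarrow> \<not> (\<exists>z. acc_point x z)}"

definition rel_bdry :: "(real ^ 'n) set \<Rightarrow> (real ^ 'n) set \<Rightarrow> (real ^ 'n) set" where
  "rel_bdry U A = (top_of_set U) frontier_of A"

definition EXT :: "('m::topological_space, 'n::finite) chart set \<Rightarrow> (('m, 'n) chart \<times> (real ^ 'n) set) set" where
  "EXT A = {(\<alpha>, U). \<alpha> \<in> A \<and> open U \<and> ran \<alpha> \<subseteq> U \<and> rel_bdry U (ran \<alpha>) \<noteq> {} \<and>
              rel_bdry U (ran \<alpha>) \<subseteq> adm_boundary \<alpha>}"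

definition covers :: "('m::topological_space, 'n::finite) chart \<times> (real ^ 'n) set \<times> (real ^ 'n) set
     \<Rightarrow> ('m, 'n) chart \<times> (real ^ 'n) set \<times> (real ^ 'n) set \<Rightarrow> bool" where
  "covers a b = (case a of (\<alpha>, U, V) \<Rightarrow> case b of (\<beta>, X, Y) \<Rightarrow>
     (\<forall>y. (\<forall>i. y i \<in> dom \<beta>) \<and> (\<exists>p\<in>Y. acc_point (\<lambda>i. chart_fun \<beta> (y i)) p) \<longrightarrow>
        (\<exists>r. strict_mono r \<and> (\<forall>i. y (r i) \<in> dom \<alpha>) \<and>
             (\<exists>p\<in>V. acc_point (\<lambda>i. chart_fun \<alpha> (y (r i))) p))))"

definition bequiv :: "('m::topological_space, 'n::finite) chart \<times> (real ^ 'n) set \<times> (real ^ 'n) set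
     \<Rightarrow> ('m, 'n) chart \<times> (real ^ 'n) set \<times> (real ^ 'n) set \<Rightarrow> bool" where
  "bequiv a b \<longleftrightarrow> covers a b \<and> covers b a"

definition S_Q :: "('m::topological_space, 'n::finite) chart set \<Rightarrow> (('m, 'n) chart \<times> (real ^ 'n) set) set
     \<Rightarrow> (('m, 'n) chart \<times> (real ^ 'n) set) set" where
  "S_Q A Q = {(\<alpha>, ran \<alpha>) | \<alpha>. \<alpha> \<in> A} \<union> Q"

definition Nset :: "('m, 'n) chart \<times> (real ^ 'n) set \<Rightarrow> (real ^ 'n) set" where
  "Nset s = (case s of (\<alpha>, U) \<Rightarrow> ran \<alpha> \<union> rel_bdry U (ran \<alpha>))"

text \<open>Points of the disjoint union N_Q: pairs (index, point).\<close>

definition N_Q :: "('m::topological_space, 'n::finite) chart set \<Rightarrow> (('m, 'n) chart \<times> (real ^ 'n) set) set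
     \<Rightarrow> ((('m, 'n) chart \<times> (real ^ 'n) set) \<times> (real ^ 'n)) set" where
  "N_Q A Q = {(s, x). s \<in> S_Q A Q \<and> x \<in> Nset s}"

definition ident_cond :: "('m::topological_space, 'n::finite) chart \<times> (real ^ 'n) set \<Rightarrow> real ^ 'n
     \<Rightarrow> ('m, 'n) chart \<times> (real ^ 'n) set \<Rightarrow> real ^ 'n \<Rightarrow> bool" where
  "ident_cond s x t y = (case s of (\<alpha>, U) \<Rightarrow> case t of (\<beta>, X) \<Rightarrow>
     (x \<in> ran \<alpha> \<and> y \<in> ran \<beta> \<and> x \<in> overlap_img \<alpha> \<beta> \<and> transition \<alpha> \<beta> x = y) \<or>
     (x \<in> rel_bdry U (ran \<alpha>) \<and> y \<in> rel_bdry X (ran \<beta>) \<and> bequiv (\<alpha>, U, {x}) (\<beta>, X, {y})))"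

definition ident :: "('m::topological_space, 'n::finite) chart set \<Rightarrow> (('m, 'n) chart \<times> (real ^ 'n) set) set
     \<Rightarrow> (('m, 'n) chart \<times> (real ^ 'n) set) \<times> (real ^ 'n)
     \<Rightarrow> (('m, 'n) chart \<times> (real ^ 'n) set) \<times> (real ^ 'n) \<Rightarrow> bool" where
  "ident A Q p p' \<longleftrightarrow> p \<in> N_Q A Q \<and> p' \<in> N_Q A Q \<and> ident_cond (fst p) (snd p) (fst p') (snd p')"

text \<open>The quotient map q : N_Q -> Q(M) (to classes of the equivalence relation generated
  by the identification).\<close>

definition qmap :: "('m::topological_space, 'n::finite) chart set \<Rightarrow> (('m, 'n) chart \<times> (real ^ 'n) set) set
     \<Rightarrow> (('m, 'n) chart \<times> (real ^ 'n) set) \<times> (real ^ 'n)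
     \<Rightarrow> ((('m, 'n) chart \<times> (real ^ 'n) set) \<times> (real ^ 'n)) set" where
  "qmap A Q p = {p' \<in> N_Q A Q. equivclp (ident A Q) p p'}"

definition Dset :: "('m::topological_space, 'n::finite) chart set \<Rightarrow> (('m, 'n) chart \<times> (real ^ 'n) set) set
     \<Rightarrow> ('m, 'n) chart \<times> (real ^ 'n) set \<Rightarrow> ('m, 'n) chart \<times> (real ^ 'n) set \<Rightarrow> (real ^ 'n) set" where
  "Dset A Q s t = {x \<in> Nset s. qmap A Q (s, x) \<in>
      (\<lambda>x. qmap A Q (s, x)) ` Nset s \<inter> (\<lambda>y. qmap A Q (t, y)) ` Nset t}"

definition trans_bar :: "('m::topological_space, 'n::finite) chart set \<Rightarrow> (('m, 'n) chart \<times> (real ^ 'n) set) set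
     \<Rightarrow> ('m, 'n) chart \<times> (real ^ 'n) set \<Rightarrow> ('m, 'n) chart \<times> (real ^ 'n) set \<Rightarrow> real ^ 'n \<Rightarrow> real ^ 'n" where
  "trans_bar A Q s t x = (THE y. y \<in> Nset t \<and> qmap A Q (t, y) = qmap A Q (s, x))"

end

theory Submission
  imports Defs
begin

(* The proof shows that on the indices of S_Q
   (charts alpha with ran alpha inside U) this identification is already an equivalence
   relation, and moreover a functional one: every x is identified with at most one y of a
   given index.  Hence q(x) = q(y) iff x and y are identified, the set D_alpha consists of
   the x having a partner, and the transition map is "x goes to its partner".  Swapping the
   roles of the two indices gives the inverse, so it remains to show continuity.  This uses
   two approximation facts: identified points x, y are simultaneously approximated by
   alpha(m), beta(m) for a common m in M, and whenever alpha(m_i) tends to x, beta(m_i)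
   tends to y. *)

lemma chart_homeomorphism:
  assumes "is_chart \<alpha>"
  shows "homeomorphism (dom \<alpha>) (ran \<alpha>) (chart_fun \<alpha>) (chart_inv \<alpha>)"
proof -
  obtain g where g: "homeomorphism (dom \<alpha>) (ran \<alpha>) (chart_fun \<alpha>) g"
    using assms unfolding is_chart_def by blast
  have inj: "inj_on (chart_fun \<alpha>) (dom \<alpha>)"
    using g unfolding homeomorphism_def by (metis inj_on_inverseI)
  have "chart_inv \<alpha> y = g y" if "y \<in> ran \<alpha>" for y
  proof -
    have "g y \<in> dom \<alpha>" "chart_fun \<alpha> (g y) = y"
      using homeomorphism_image2[OF g] homeomorphism_apply2[OF g] that by blast+
    then show ?thesis using inj unfolding chart_inv_def by (metis inv_into_f_f)
  qed
  then show ?thesis by (intro homeomorphism_cong[OF g]) auto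
qed

lemma chart_fun_in_ran: "m \<in> dom \<alpha> \<Longrightarrow> chart_fun \<alpha> m \<in> ran \<alpha>"
  unfolding chart_fun_def ran_def by auto

lemma chart_inv_in_dom: "is_chart \<alpha> \<Longrightarrow> y \<in> ran \<alpha> \<Longrightarrow> chart_inv \<alpha> y \<in> dom \<alpha>"
  using homeomorphism_image2[OF chart_homeomorphism] by blast

lemma chart_inv_fun: "is_chart \<alpha> \<Longrightarrow> m \<in> dom \<alpha> \<Longrightarrow> chart_inv \<alpha> (chart_fun \<alpha> m) = m"
  using homeomorphism_apply1[OF chart_homeomorphism] .

lemma chart_fun_inv: "is_chart \<alpha> \<Longrightarrow> y \<in> ran \<alpha> \<Longrightarrow> chart_fun \<alpha> (chart_inv \<alpha> y) = y"
  using homeomorphism_apply2[OF chart_homeomorphism] .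

text \<open>Two charts image a common point of the manifold at x and y.  This is the
  "interior" half of the identification, written without the transition map.\<close>

definition same_point :: "('m, 'n) chart \<Rightarrow> ('m, 'n) chart \<Rightarrow> real ^ 'n \<Rightarrow> real ^ 'n \<Rightarrow> bool" where
  "same_point \<alpha> \<beta> x y \<longleftrightarrow> (\<exists>m \<in> dom \<alpha> \<inter> dom \<beta>. chart_fun \<alpha> m = x \<and> chart_fun \<beta> m = y)"

lemma same_point_iff_transition:
  assumes "is_chart \<alpha>"
  shows "same_point \<alpha> \<beta> x y \<longleftrightarrow>
    x \<in> ran \<alpha> \<and> y \<in> ran \<beta> \<and> x \<in> overlap_img \<alpha> \<beta> \<and> transition \<alpha> \<beta> x = y"
proof
  assume "same_point \<alpha> \<beta> x y"
  then obtain m where m: "m \<in> dom \<alpha>" "m \<in> dom \<beta>" "chart_fun \<alpha> m = x" "chart_fun \<beta> m = y"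
    unfolding same_point_def by blast
  have "x \<in> overlap_img \<alpha> \<beta>"
    using m unfolding overlap_img_def by blast
  moreover have "transition \<alpha> \<beta> x = y"
    using chart_inv_fun[OF assms m(1)] m(3,4) unfolding transition_def by simp
  moreover have "x \<in> ran \<alpha>" "y \<in> ran \<beta>"
    using chart_fun_in_ran[OF m(1)] chart_fun_in_ran[OF m(2)] m(3,4) by simp_all
  ultimately show "x \<in> ran \<alpha> \<and> y \<in> ran \<beta> \<and> x \<in> overlap_img \<alpha> \<beta> \<and> transition \<alpha> \<beta> x = y"
    by blast
next
  assume "x \<in> ran \<alpha> \<and> y \<in> ran \<beta> \<and> x \<in> overlap_img \<alpha> \<beta> \<and> transition \<alpha> \<beta> x = y"
  then obtain m where m: "m \<in> dom \<alpha> \<inter> dom \<beta>" "chart_fun \<alpha> m = x" "transition \<alpha> \<beta> x = y"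
    unfolding overlap_img_def by blast
  then have "chart_fun \<beta> m = y"
    using chart_inv_fun[OF assms, of m] unfolding transition_def by simp
  with m show "same_point \<alpha> \<beta> x y" unfolding same_point_def by blast
qed

lemma overlap_same_point:
  assumes "is_chart \<alpha>" "x \<in> overlap_img \<alpha> \<beta>"
  shows "same_point \<alpha> \<beta> x (transition \<alpha> \<beta> x)"
proof -
  obtain m where m: "m \<in> dom \<alpha>" "m \<in> dom \<beta>" "x = chart_fun \<alpha> m"
    using assms(2) unfolding overlap_img_def by blast
  then have "transition \<alpha> \<beta> x = chart_fun \<beta> m"
    using chart_inv_fun[OF assms(1) m(1)] unfolding transition_def by simp
  then show ?thesis using m unfolding same_point_def by auto
qed

text \<open>Approaching a point of a chart's image through the chart forces convergence in the
  manifold, so any second chart defined there converges too.\<close>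

lemma same_point_limit:
  assumes \<alpha>: "is_chart \<alpha>" and \<beta>: "is_chart \<beta>" and xy: "same_point \<alpha> \<beta> x y"
    and m: "\<forall>i. m i \<in> dom \<alpha> \<inter> dom \<beta>" and lim: "(\<lambda>i. chart_fun \<alpha> (m i)) \<longlonglongrightarrow> x"
  shows "(\<lambda>i. chart_fun \<beta> (m i)) \<longlonglongrightarrow> y"
proof -
  obtain m0 where m0: "m0 \<in> dom \<alpha>" "m0 \<in> dom \<beta>" "x = chart_fun \<alpha> m0" "y = chart_fun \<beta> m0"
    using xy unfolding same_point_def by blast
  have m_dom: "m i \<in> dom \<alpha>" "m i \<in> dom \<beta>" for i
    using m by blast+
  have "(\<lambda>i. chart_inv \<alpha> (chart_fun \<alpha> (m i))) \<longlonglongrightarrow> chart_inv \<alpha> (chart_fun \<alpha> m0)"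
  proof (rule continuous_on_tendsto_compose[OF homeomorphism_cont2[OF chart_homeomorphism[OF \<alpha>]]])
    show "(\<lambda>i. chart_fun \<alpha> (m i)) \<longlonglongrightarrow> chart_fun \<alpha> m0" using lim m0(3) by simp
    show "chart_fun \<alpha> m0 \<in> ran \<alpha>" using chart_fun_in_ran[OF m0(1)] .
    show "\<forall>\<^sub>F i in sequentially. chart_fun \<alpha> (m i) \<in> ran \<alpha>"
      using chart_fun_in_ran[OF m_dom(1)] by (rule always_eventually[OF allI])
  qed
  then have "m \<longlonglongrightarrow> m0"
    using chart_inv_fun[OF \<alpha> m_dom(1)] chart_inv_fun[OF \<alpha> m0(1)] by simp
  then have "(\<lambda>i. chart_fun \<beta> (m i)) \<longlonglongrightarrow> chart_fun \<beta> m0"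
    by (rule continuous_on_tendsto_compose[OF homeomorphism_cont1[OF chart_homeomorphism[OF \<beta>]]])
       (use m0(2) m_dom(2) in \<open>auto intro: always_eventually\<close>)
  then show ?thesis using m0(4) by simp
qed

lemma chart_closure_sequence:
  assumes "is_chart \<alpha>" "x \<in> closure (ran \<alpha>)"
  obtains m where "\<forall>i. m i \<in> dom \<alpha>" "(\<lambda>i. chart_fun \<alpha> (m i)) \<longlonglongrightarrow> x"
proof -
  obtain z where z: "\<forall>n. z n \<in> ran \<alpha>" "z \<longlonglongrightarrow> x"
    using assms(2) closure_sequential by blast
  show ?thesis
    by (rule that[of "\<lambda>i. chart_inv \<alpha> (z i)"])
       (use z chart_inv_in_dom[OF assms(1)] chart_fun_inv[OF assms(1)] in auto)
qed

lemma tendsto_acc_point: "X \<longlonglongrightarrow> p \<Longrightarrow> acc_point X p"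
  unfolding acc_point_def
proof (intro allI impI)
  fix S assume "X \<longlonglongrightarrow> p" "open S" "p \<in> S"
  then have "\<forall>\<^sub>F i in sequentially. X i \<in> S" by (rule topological_tendstoD)
  then show "\<exists>\<^sub>F i in sequentially. X i \<in> S"
    using eventually_frequently[OF trivial_limit_sequentially] by blast
qed

lemma acc_point_limit_unique:
  fixes X :: "nat \<Rightarrow> 'a::t2_space"
  assumes "X \<longlonglongrightarrow> p" "acc_point X q"
  shows "p = q"
proof (rule ccontr)
  assume "p \<noteq> q"
  then obtain S T where ST: "open S" "open T" "p \<in> S" "q \<in> T" "S \<inter> T = {}"
    using hausdorff[of p q] by blast
  have ev: "\<forall>\<^sub>F i in sequentially. X i \<in> S" using topological_tendstoD[OF assms(1) ST(1,3)] .
  have fr: "\<exists>\<^sub>F i in sequentially. X i \<in> T"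
    using assms(2) ST(2,4) unfolding acc_point_def by blast
  have "\<exists>\<^sub>F i in sequentially. X i \<in> S \<and> X i \<in> T"
    by (rule frequently_mp[OF eventually_mono[OF ev] fr]) auto
  then obtain i where "X i \<in> S" "X i \<in> T" using frequently_ex by blast
  then show False using ST(5) by blast
qed

lemma acc_point_frequently_close:
  fixes X :: "nat \<Rightarrow> 'a::metric_space"
  assumes "acc_point X y" "e > 0"
  shows "\<exists>\<^sub>F i in sequentially. dist (X i) y < e"
proof -
  have "\<exists>\<^sub>F i in sequentially. X i \<in> ball y e"
    using assms open_ball[of y e] centre_in_ball[of y e] unfolding acc_point_def by blast
  then show ?thesis by (rule frequently_elim1) (simp add: dist_commute)
qed

lemma tendsto_close_sequence:
  fixes f g :: "nat \<Rightarrow> 'a::metric_space"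
  assumes close: "\<forall>n. dist (f n) (g n) < inverse (real (Suc n))" and lim: "g \<longlonglongrightarrow> a"
  shows "f \<longlonglongrightarrow> a"
proof -
  have "(\<lambda>n. dist (g n) a) \<longlonglongrightarrow> 0" using lim tendsto_dist_iff by blast
  then have bound: "(\<lambda>n. inverse (real (Suc n)) + dist (g n) a) \<longlonglongrightarrow> 0"
    by (rule tendsto_add_zero[OF LIMSEQ_inverse_real_of_nat])
  have "norm (dist (f n) a) \<le> inverse (real (Suc n)) + dist (g n) a" for n
    using dist_triangle[of "f n" a "g n"] close[rule_format, of n] by simp
  then have "(\<lambda>n. dist (f n) a) \<longlonglongrightarrow> 0"
    by (intro Lim_null_comparison[OF _ bound]) simp
  then show ?thesis using tendsto_dist_iff by blast
qed

section \<open>Equivalence of boundary sets\<close>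

lemma covers_refl: "covers (\<alpha>, U, V) (\<alpha>, U, V)"
  unfolding covers_def by (auto intro!: exI[of _ id] simp: strict_mono_def)

lemma coversD:
  assumes "covers (\<alpha>, U, X) (\<beta>, V, Y)"
    and "\<forall>i. y i \<in> dom \<beta>" "p \<in> Y" "acc_point (\<lambda>i. chart_fun \<beta> (y i)) p"
  obtains r p' where "strict_mono r" "\<forall>i. y (r i) \<in> dom \<alpha>" "p' \<in> X"
    "acc_point (\<lambda>i. chart_fun \<alpha> (y (r i))) p'"
  using assms unfolding covers_def prod.case by blast

lemma covers_trans:
  assumes "covers (\<alpha>, U, X) (\<beta>, V, Y)" "covers (\<beta>, V, Y) (\<gamma>, W, Z)"
  shows "covers (\<alpha>, U, X) (\<gamma>, W, Z)"
  unfolding covers_def prod.case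
proof (intro allI impI)
  fix y assume "(\<forall>i. y i \<in> dom \<gamma>) \<and> (\<exists>p\<in>Z. acc_point (\<lambda>i. chart_fun \<gamma> (y i)) p)"
  then obtain r p where r: "strict_mono r" "\<forall>i. y (r i) \<in> dom \<beta>" "p \<in> Y"
      "acc_point (\<lambda>i. chart_fun \<beta> (y (r i))) p"
    using coversD[OF assms(2)] by blast
  obtain r' p' where r': "strict_mono r'" "\<forall>i. y (r (r' i)) \<in> dom \<alpha>" "p' \<in> X"
      "acc_point (\<lambda>i. chart_fun \<alpha> (y (r (r' i)))) p'"
    using coversD[OF assms(1) r(2-4)] by blast
  have "strict_mono (r \<circ> r')" using r(1) r'(1) by (simp add: strict_mono_def)
  then show "\<exists>r. strict_mono r \<and> (\<forall>i. y (r i) \<in> dom \<alpha>) \<and>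
      (\<exists>p\<in>X. acc_point (\<lambda>i. chart_fun \<alpha> (y (r i))) p)"
    using r' by (intro exI[of _ "r \<circ> r'"]) auto
qed

lemma bequiv_refl: "bequiv a a"
  unfolding bequiv_def by (cases a) (simp add: covers_refl)

lemma bequiv_sym: "bequiv a b \<Longrightarrow> bequiv b a"
  unfolding bequiv_def by simp

lemma bequiv_trans: "bequiv a b \<Longrightarrow> bequiv b c \<Longrightarrow> bequiv a c"
  unfolding bequiv_def by (cases a; cases b; cases c) (metis covers_trans)

lemma covers_pointD:
  assumes "covers (\<beta>, V, {y}) (\<alpha>, U, {x})"
    and "\<forall>i. z i \<in> dom \<alpha>" "acc_point (\<lambda>i. chart_fun \<alpha> (z i)) x"
  obtains r where "strict_mono r" "\<forall>i. z (r i) \<in> dom \<beta>" "acc_point (\<lambda>i. chart_fun \<beta> (z (r i))) y"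
  using assms unfolding covers_def prod.case by blast

section \<open>The identification relation\<close>

definition chart_index :: "('m::topological_space, 'n::finite) chart \<times> (real ^ 'n) set \<Rightarrow> bool" where
  "chart_index s \<longleftrightarrow> is_chart (fst s) \<and> ran (fst s) \<subseteq> snd s"

lemma rel_bdry_outside_ran:
  assumes "chart_index (\<alpha>, U)" "x \<in> rel_bdry U (ran \<alpha>)"
  shows "x \<notin> ran \<alpha>" "x \<in> closure (ran \<alpha>)"
proof -
  have "openin (top_of_set U) (ran \<alpha>)"
    using assms(1) unfolding chart_index_def is_chart_def by (auto simp: openin_open)
  then have "rel_bdry U (ran \<alpha>) = top_of_set U closure_of ran \<alpha> - ran \<alpha>"
    unfolding rel_bdry_def by (rule frontier_of_openin)
  then show "x \<notin> ran \<alpha>" "x \<in> closure (ran \<alpha>)"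
    using assms(2) closure_of_subtopology_subset[of euclidean U "ran \<alpha>"] by auto
qed

lemma same_point_ran: "same_point \<alpha> \<beta> x y \<Longrightarrow> x \<in> ran \<alpha> \<and> y \<in> ran \<beta>"
  unfolding same_point_def by (auto intro: chart_fun_in_ran)

lemma same_point_sym: "same_point \<alpha> \<beta> x y \<Longrightarrow> same_point \<beta> \<alpha> y x"
  unfolding same_point_def by blast

text \<open>Since beta is injective, the common points of the two pairs coincide.\<close>

lemma same_point_trans:
  assumes "is_chart \<beta>" "same_point \<alpha> \<beta> x y" "same_point \<beta> \<gamma> y z"
  shows "same_point \<alpha> \<gamma> x z"
proof -
  obtain m m' where m: "m \<in> dom \<alpha> \<inter> dom \<beta>" "chart_fun \<alpha> m = x" "chart_fun \<beta> m = y"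
    and m': "m' \<in> dom \<beta> \<inter> dom \<gamma>" "chart_fun \<beta> m' = y" "chart_fun \<gamma> m' = z"
    using assms(2,3) unfolding same_point_def by blast
  have "m = m'" using chart_inv_fun[OF assms(1), of m] chart_inv_fun[OF assms(1), of m'] m m' by simp
  then show ?thesis using m m' unfolding same_point_def by blast
qed

lemma ident_cond_iff:
  assumes "is_chart \<alpha>"
  shows "ident_cond (\<alpha>, U) x (\<beta>, V) y \<longleftrightarrow> same_point \<alpha> \<beta> x y \<or>
    (x \<in> rel_bdry U (ran \<alpha>) \<and> y \<in> rel_bdry V (ran \<beta>) \<and> bequiv (\<alpha>, U, {x}) (\<beta>, V, {y}))"
  unfolding ident_cond_def same_point_iff_transition[OF assms] by simp

lemma ident_cond_Nset: "ident_cond s x t y \<Longrightarrow> x \<in> Nset s \<and> y \<in> Nset t"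
  unfolding ident_cond_def Nset_def by (auto split: prod.splits)

lemma ident_cond_refl:
  assumes "chart_index s" "x \<in> Nset s"
  shows "ident_cond s x s x"
proof -
  obtain \<alpha> U where s: "s = (\<alpha>, U)" by fastforce
  have \<alpha>: "is_chart \<alpha>" using assms(1) unfolding s chart_index_def by simp
  have "same_point \<alpha> \<alpha> x x" if "x \<in> ran \<alpha>"
    unfolding same_point_def
    using that chart_inv_in_dom[OF \<alpha>] chart_fun_inv[OF \<alpha>] by blast
  then show ?thesis
    using assms(2) unfolding s ident_cond_iff[OF \<alpha>] Nset_def by (auto simp: bequiv_refl)
qed

lemma ident_cond_sym:
  assumes "chart_index s" "chart_index t" "ident_cond s x t y"
  shows "ident_cond t y s x"
proof -
  obtain \<alpha> U \<beta> V where s: "s = (\<alpha>, U)" and t: "t = (\<beta>, V)" by fastforce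
  have \<alpha>: "is_chart \<alpha>" and \<beta>: "is_chart \<beta>"
    using assms(1,2) unfolding s t chart_index_def by simp_all
  show ?thesis
    using assms(3) same_point_sym bequiv_sym unfolding s t ident_cond_iff[OF \<alpha>] ident_cond_iff[OF \<beta>]
    by blast
qed

text \<open>Transitivity: an interior middle point forces both links to be interior, a boundary
  middle point forces both links to be boundary links.\<close>

lemma ident_cond_trans:
  assumes "chart_index s" "chart_index t" "chart_index u"
    and "ident_cond s x t y" "ident_cond t y u z"
  shows "ident_cond s x u z"
proof -
  obtain \<alpha> U \<beta> V \<gamma> W where s: "s = (\<alpha>, U)" and t: "t = (\<beta>, V)" and u: "u = (\<gamma>, W)"
    by fastforce
  have \<alpha>: "is_chart \<alpha>" and \<beta>: "is_chart \<beta>"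
    using assms(1,2) unfolding s t chart_index_def by simp_all
  show ?thesis
  proof (cases "y \<in> ran \<beta>")
    case True
    then have "y \<notin> rel_bdry V (ran \<beta>)" using rel_bdry_outside_ran assms(2) t by blast
    then have "same_point \<alpha> \<beta> x y" "same_point \<beta> \<gamma> y z"
      using assms(4,5) unfolding s t u ident_cond_iff[OF \<alpha>] ident_cond_iff[OF \<beta>] by auto
    then show ?thesis unfolding s u ident_cond_iff[OF \<alpha>] by (blast intro: same_point_trans[OF \<beta>])
  next
    case False
    then have "\<not> same_point \<alpha> \<beta> x y" "\<not> same_point \<beta> \<gamma> y z"
      using same_point_ran by blast+
    then have "x \<in> rel_bdry U (ran \<alpha>) \<and> bequiv (\<alpha>, U, {x}) (\<beta>, V, {y})"
      "z \<in> rel_bdry W (ran \<gamma>) \<and> bequiv (\<beta>, V, {y}) (\<gamma>, W, {z})"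
      using assms(4,5) unfolding s t u ident_cond_iff[OF \<alpha>] ident_cond_iff[OF \<beta>] by blast+
    then show ?thesis unfolding s u ident_cond_iff[OF \<alpha>] using bequiv_trans by blast
  qed
qed

text \<open>Within one index a point is identified only with itself: for boundary points, a
  sequence converging to y has a subsequence accumulating at the equivalent point y'.\<close>

lemma ident_cond_self_unique:
  assumes "chart_index (\<beta>, V)" "ident_cond (\<beta>, V) y (\<beta>, V) y'"
  shows "y = y'"
proof -
  have \<beta>: "is_chart \<beta>" using assms(1) unfolding chart_index_def by simp
  consider "same_point \<beta> \<beta> y y'"
    | "y \<in> rel_bdry V (ran \<beta>)" "covers (\<beta>, V, {y'}) (\<beta>, V, {y})"
    using assms(2) unfolding ident_cond_iff[OF \<beta>] bequiv_def by blast
  then show ?thesis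
  proof cases
    case 1
    then show ?thesis unfolding same_point_def by blast
  next
    case 2
    obtain m where m: "\<forall>i. m i \<in> dom \<beta>" "(\<lambda>i. chart_fun \<beta> (m i)) \<longlonglongrightarrow> y"
      using chart_closure_sequence[OF \<beta> rel_bdry_outside_ran(2)[OF assms(1) 2(1)]] by blast
    obtain r where r: "strict_mono r" "acc_point (\<lambda>i. chart_fun \<beta> (m (r i))) y'"
      using covers_pointD[OF 2(2) m(1) tendsto_acc_point[OF m(2)]] by blast
    have "(\<lambda>i. chart_fun \<beta> (m (r i))) \<longlonglongrightarrow> y"
      using LIMSEQ_subseq_LIMSEQ[OF m(2) r(1)] by (simp add: o_def)
    then show ?thesis using acc_point_limit_unique r(2) by blast
  qed
qed

lemma ident_cond_unique:
  assumes "chart_index s" "chart_index t" "ident_cond s x t y" "ident_cond s x t y'"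
  shows "y = y'"
proof -
  have "ident_cond t y t y'"
    using ident_cond_trans[OF assms(2,1,2) ident_cond_sym[OF assms(1,2,3)] assms(4)] .
  then show ?thesis using ident_cond_self_unique assms(2) by (metis prod.collapse)
qed

section \<open>The quotient map\<close>

definition charted_completion ::
    "('m::topological_space, 'n::finite) chart set \<Rightarrow> (('m, 'n) chart \<times> (real ^ 'n) set) set \<Rightarrow> bool" where
  "charted_completion A Q \<longleftrightarrow> (\<forall>s \<in> S_Q A Q. chart_index s)"

lemma charted_completionI:
  assumes "maximal_smooth_atlas A" "Q \<subseteq> EXT A"
  shows "charted_completion A Q"
proof -
  have "\<forall>\<alpha>\<in>A. is_chart \<alpha>" using assms(1) unfolding maximal_smooth_atlas_def by blast
  then show ?thesis
    using assms(2) unfolding charted_completion_def S_Q_def chart_index_def EXT_def by fastforce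
qed

text \<open>The identification is already an equivalence relation on N_Q, so generating one adds nothing.\<close>

lemma ident_equivclp:
  assumes Q: "charted_completion A Q" and p: "p \<in> N_Q A Q" and e: "equivclp (ident A Q) p p'"
  shows "ident A Q p p'"
proof -
  have index: "chart_index (fst r)" if "r \<in> N_Q A Q" for r
    using Q that unfolding charted_completion_def N_Q_def by auto
  show ?thesis
    using e
  proof (induction rule: equivclp_induct)
    case base
    show ?case using p ident_cond_refl[OF index[OF p]] unfolding ident_def N_Q_def by auto
  next
    case (step y z)
    have "ident A Q y z"
      using step(2) ident_cond_sym index unfolding ident_def by blast
    then show ?case
      using step(3) ident_cond_trans index unfolding ident_def by blast
  qed
qed

lemma qmap_eq_iff:
  assumes Q: "charted_completion A Q" and st: "s \<in> S_Q A Q" "t \<in> S_Q A Q"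
    and xy: "x \<in> Nset s" "y \<in> Nset t"
  shows "qmap A Q (s, x) = qmap A Q (t, y) \<longleftrightarrow> ident_cond s x t y"
proof -
  have p: "(s, x) \<in> N_Q A Q" "(t, y) \<in> N_Q A Q" using st xy unfolding N_Q_def by auto
  have "qmap A Q (s, x) = qmap A Q (t, y) \<longleftrightarrow> equivclp (ident A Q) (s, x) (t, y)"
  proof
    assume same: "qmap A Q (s, x) = qmap A Q (t, y)"
    have "(t, y) \<in> qmap A Q (t, y)" using p(2) unfolding qmap_def by simp
    then have "(t, y) \<in> qmap A Q (s, x)" by (simp only: same)
    then show "equivclp (ident A Q) (s, x) (t, y)" unfolding qmap_def by simp
  next
    assume e: "equivclp (ident A Q) (s, x) (t, y)"
    show "qmap A Q (s, x) = qmap A Q (t, y)"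
      unfolding qmap_def
    proof (intro Collect_cong conj_cong refl iffI)
      fix r assume "equivclp (ident A Q) (s, x) r"
      then show "equivclp (ident A Q) (t, y) r" by (rule equivclp_trans[OF equivclp_sym[OF e]])
    next
      fix r assume "equivclp (ident A Q) (t, y) r"
      then show "equivclp (ident A Q) (s, x) r" by (rule equivclp_trans[OF e])
    qed
  qed
  also have "\<dots> \<longleftrightarrow> ident A Q (s, x) (t, y)"
    using ident_equivclp[OF Q p(1), of "(t, y)"] r_into_equivclp[of "ident A Q" "(s, x)" "(t, y)"]
    by blast
  also have "\<dots> \<longleftrightarrow> ident_cond s x t y"
    using p unfolding ident_def by simp
  finally show ?thesis .
qed

lemma Dset_iff:
  assumes Q: "charted_completion A Q" and st: "s \<in> S_Q A Q" "t \<in> S_Q A Q"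
  shows "x \<in> Dset A Q s t \<longleftrightarrow> (\<exists>y. ident_cond s x t y)"
proof
  assume "x \<in> Dset A Q s t"
  then obtain y where "x \<in> Nset s" "y \<in> Nset t" "qmap A Q (s, x) = qmap A Q (t, y)"
    unfolding Dset_def by auto
  then show "\<exists>y. ident_cond s x t y" using qmap_eq_iff[OF Q st] by blast
next
  assume "\<exists>y. ident_cond s x t y"
  then obtain y where y: "ident_cond s x t y" by blast
  then have xy: "x \<in> Nset s" "y \<in> Nset t" using ident_cond_Nset by blast+
  then have "qmap A Q (s, x) = qmap A Q (t, y)" using qmap_eq_iff[OF Q st] y by blast
  then show "x \<in> Dset A Q s t" unfolding Dset_def using xy by auto
qed

lemma trans_bar_eq:
  assumes Q: "charted_completion A Q" and st: "s \<in> S_Q A Q" "t \<in> S_Q A Q"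
    and xy: "ident_cond s x t y"
  shows "trans_bar A Q s t x = y"
  unfolding trans_bar_def
proof (rule the_equality)
  have index: "chart_index s" "chart_index t" using Q st unfolding charted_completion_def by blast+
  have x: "x \<in> Nset s" and y: "y \<in> Nset t" using ident_cond_Nset[OF xy] by blast+
  show "y \<in> Nset t \<and> qmap A Q (t, y) = qmap A Q (s, x)"
    using qmap_eq_iff[OF Q st x y] xy y by simp
  fix y' assume "y' \<in> Nset t \<and> qmap A Q (t, y') = qmap A Q (s, x)"
  then have "ident_cond s x t y'" using qmap_eq_iff[OF Q st x] by metis
  then show "y' = y" using ident_cond_unique[OF index xy] by simp
qed

lemma trans_bar_iff:
  assumes Q: "charted_completion A Q" and st: "s \<in> S_Q A Q" "t \<in> S_Q A Q"
  shows "x \<in> Dset A Q s t \<and> trans_bar A Q s t x = y \<longleftrightarrow> ident_cond s x t y"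
  using Dset_iff[OF Q st] trans_bar_eq[OF Q st] by metis

lemma trans_bar_inverse:
  assumes Q: "charted_completion A Q" and st: "s \<in> S_Q A Q" "t \<in> S_Q A Q"
    and x: "x \<in> Dset A Q s t"
  shows "trans_bar A Q s t x \<in> Dset A Q t s \<and> trans_bar A Q t s (trans_bar A Q s t x) = x"
proof -
  have index: "chart_index s" "chart_index t" using Q st unfolding charted_completion_def by blast+
  have "ident_cond s x t (trans_bar A Q s t x)" using x trans_bar_iff[OF Q st] by blast
  then have "ident_cond t (trans_bar A Q s t x) s x" using ident_cond_sym[OF index] by blast
  then show ?thesis using trans_bar_iff[OF Q st(2,1)] by blast
qed

section \<open>Continuity of the transition map\<close>

text \<open>At the boundary: take chart values tending to x and pass to the subsequence that the
  equivalence of boundary points provides, which accumulates at y.\<close>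

lemma ident_cond_approx:
  assumes \<alpha>U: "chart_index (\<alpha>, U)" and \<beta>V: "chart_index (\<beta>, V)"
    and xy: "ident_cond (\<alpha>, U) x (\<beta>, V) y" and e: "e > 0"
  shows "\<exists>m \<in> dom \<alpha> \<inter> dom \<beta>. dist (chart_fun \<alpha> m) x < e \<and> dist (chart_fun \<beta> m) y < e"
proof -
  have \<alpha>: "is_chart \<alpha>" using \<alpha>U unfolding chart_index_def by simp
  consider "same_point \<alpha> \<beta> x y"
    | "x \<in> rel_bdry U (ran \<alpha>)" "covers (\<beta>, V, {y}) (\<alpha>, U, {x})"
    using xy unfolding ident_cond_iff[OF \<alpha>] bequiv_def by blast
  then show ?thesis
  proof cases
    case 1
    then obtain m where m: "m \<in> dom \<alpha> \<inter> dom \<beta>" "chart_fun \<alpha> m = x" "chart_fun \<beta> m = y"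
      unfolding same_point_def by blast
    then have "dist (chart_fun \<alpha> m) x < e \<and> dist (chart_fun \<beta> m) y < e" using e by simp
    then show ?thesis using m(1) by blast
  next
    case 2
    obtain m where m: "\<forall>i. m i \<in> dom \<alpha>" "(\<lambda>i. chart_fun \<alpha> (m i)) \<longlonglongrightarrow> x"
      using chart_closure_sequence[OF \<alpha> rel_bdry_outside_ran(2)[OF \<alpha>U 2(1)]] by blast
    obtain r where r: "strict_mono r" "\<forall>i. m (r i) \<in> dom \<beta>"
        "acc_point (\<lambda>i. chart_fun \<beta> (m (r i))) y"
      using covers_pointD[OF 2(2) m(1) tendsto_acc_point[OF m(2)]] by blast
    have "(\<lambda>i. chart_fun \<alpha> (m (r i))) \<longlonglongrightarrow> x"
      using LIMSEQ_subseq_LIMSEQ[OF m(2) r(1)] by (simp add: o_def)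
    then have ev: "\<forall>\<^sub>F i in sequentially. dist (chart_fun \<alpha> (m (r i))) x < e"
      using e by (rule tendstoD)
    have fr: "\<exists>\<^sub>F i in sequentially. dist (chart_fun \<beta> (m (r i))) y < e"
      using acc_point_frequently_close[OF r(3) e] .
    have "\<exists>\<^sub>F i in sequentially.
        dist (chart_fun \<alpha> (m (r i))) x < e \<and> dist (chart_fun \<beta> (m (r i))) y < e"
      by (rule frequently_mp[OF eventually_mono[OF ev] fr]) auto
    then obtain i where "dist (chart_fun \<alpha> (m (r i))) x < e" "dist (chart_fun \<beta> (m (r i))) y < e"
      using frequently_ex by blast
    then show ?thesis using m(1) r(2) by blast
  qed
qed

text \<open>At the
  boundary: otherwise a subsequence stays e away from y, yet by the equivalence of boundary
  points a further subsequence accumulates at y.\<close>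

lemma ident_cond_limit:
  assumes \<alpha>U: "chart_index (\<alpha>, U)" and \<beta>V: "chart_index (\<beta>, V)"
    and xy: "ident_cond (\<alpha>, U) x (\<beta>, V) y"
    and m: "\<forall>i. m i \<in> dom \<alpha> \<inter> dom \<beta>" and lim: "(\<lambda>i. chart_fun \<alpha> (m i)) \<longlonglongrightarrow> x"
  shows "(\<lambda>i. chart_fun \<beta> (m i)) \<longlonglongrightarrow> y"
proof -
  have \<alpha>: "is_chart \<alpha>" and \<beta>: "is_chart \<beta>" using \<alpha>U \<beta>V unfolding chart_index_def by simp_all
  consider "same_point \<alpha> \<beta> x y" | "covers (\<beta>, V, {y}) (\<alpha>, U, {x})"
    using xy unfolding ident_cond_iff[OF \<alpha>] bequiv_def by blast
  then show ?thesis
  proof cases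
    case 1
    then show ?thesis using same_point_limit[OF \<alpha> \<beta> _ m lim] by blast
  next
    case 2
    show ?thesis
    proof (rule ccontr)
      assume "\<not> (\<lambda>i. chart_fun \<beta> (m i)) \<longlonglongrightarrow> y"
      then obtain e where e: "e > 0"
          "\<not> (\<forall>\<^sub>F i in sequentially. dist (chart_fun \<beta> (m i)) y < e)"
        unfolding tendsto_iff by blast
      obtain r :: "nat \<Rightarrow> nat" where r: "strict_mono r" "\<forall>n. \<not> dist (chart_fun \<beta> (m (r n))) y < e"
        using not_eventually_sequentiallyD[OF e(2)] by blast
      have "(\<lambda>i. chart_fun \<alpha> (m (r i))) \<longlonglongrightarrow> x"
        using LIMSEQ_subseq_LIMSEQ[OF lim r(1)] by (simp add: o_def)
      moreover have "\<forall>i. m (r i) \<in> dom \<alpha>" using m by blast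
      ultimately obtain r' where "acc_point (\<lambda>i. chart_fun \<beta> (m (r (r' i)))) y"
        using covers_pointD[OF 2, of "\<lambda>i. m (r i)"] tendsto_acc_point by blast
      then have "\<exists>\<^sub>F i in sequentially. dist (chart_fun \<beta> (m (r (r' i)))) y < e"
        using acc_point_frequently_close e(1) by blast
      then show False using r(2) frequently_ex by blast
    qed
  qed
qed

text \<open>Continuity: approximate each u_n and its partner by chart values at a common point m_n,
  then the two limit transfer lemmas carry the convergence u_n -> a over to the partners.\<close>

lemma trans_bar_continuous:
  assumes Q: "charted_completion A Q" and st: "(\<alpha>, U) \<in> S_Q A Q" "(\<beta>, V) \<in> S_Q A Q"
  shows "continuous_on (Dset A Q (\<alpha>, U) (\<beta>, V)) (trans_bar A Q (\<alpha>, U) (\<beta>, V))"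
proof (rule continuous_on_sequentiallyI)
  let ?D = "Dset A Q (\<alpha>, U) (\<beta>, V)" and ?T = "trans_bar A Q (\<alpha>, U) (\<beta>, V)"
  have index: "chart_index (\<alpha>, U)" "chart_index (\<beta>, V)"
    using Q st unfolding charted_completion_def by blast+
  have partner: "ident_cond (\<alpha>, U) x (\<beta>, V) (?T x)" if "x \<in> ?D" for x
    using that trans_bar_iff[OF Q st] by blast
  fix u a assume u: "\<forall>n. u n \<in> ?D" and a: "a \<in> ?D" and lim: "u \<longlonglongrightarrow> a"
  have "\<forall>n. \<exists>m \<in> dom \<alpha> \<inter> dom \<beta>. dist (chart_fun \<alpha> m) (u n) < inverse (real (Suc n))
      \<and> dist (chart_fun \<beta> m) (?T (u n)) < inverse (real (Suc n))"
    using ident_cond_approx[OF index partner] u by simp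
  then obtain M where M: "\<forall>n. M n \<in> dom \<alpha> \<inter> dom \<beta>"
      "\<forall>n. dist (chart_fun \<alpha> (M n)) (u n) < inverse (real (Suc n))"
      "\<forall>n. dist (chart_fun \<beta> (M n)) (?T (u n)) < inverse (real (Suc n))"
    by metis
  have "(\<lambda>n. chart_fun \<alpha> (M n)) \<longlonglongrightarrow> a"
    using tendsto_close_sequence[OF M(2) lim] .
  then have lim_\<beta>: "(\<lambda>n. chart_fun \<beta> (M n)) \<longlonglongrightarrow> ?T a"
    using ident_cond_limit[OF index partner[OF a] M(1)] by blast
  have close_\<beta>: "\<forall>n. dist (?T (u n)) (chart_fun \<beta> (M n)) < inverse (real (Suc n))"
    using M(3) by (simp add: dist_commute)
  show "(\<lambda>n. ?T (u n)) \<longlonglongrightarrow> ?T a"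
    using tendsto_close_sequence[OF close_\<beta> lim_\<beta>] .
qed

lemma trans_bar_homeomorphism:
  assumes Q: "charted_completion A Q" and st: "(\<alpha>, U) \<in> S_Q A Q" "(\<beta>, V) \<in> S_Q A Q"
  shows "homeomorphism (Dset A Q (\<alpha>, U) (\<beta>, V)) (Dset A Q (\<beta>, V) (\<alpha>, U))
    (trans_bar A Q (\<alpha>, U) (\<beta>, V)) (trans_bar A Q (\<beta>, V) (\<alpha>, U))"
  using trans_bar_continuous[OF Q st] trans_bar_continuous[OF Q st(2,1)]
    trans_bar_inverse[OF Q st] trans_bar_inverse[OF Q st(2,1)]
  by (intro homeomorphismI) auto

theorem mainTheorem5:
  fixes A :: "('m::{t2_space, second_countable_topology}, 'n::finite) chart set"
    and Q :: "(('m, 'n) chart \<times> (real ^ 'n) set) set"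
    and \<alpha> \<beta> :: "('m, 'n) chart" and U V :: "(real ^ 'n) set"
  assumes "maximal_smooth_atlas A"
    and "Q \<subseteq> EXT A"
    and "(\<alpha>, U) \<in> S_Q A Q" and "(\<beta>, V) \<in> S_Q A Q"
  shows "(\<forall>x \<in> Dset A Q (\<alpha>, U) (\<beta>, V).
            \<exists>!y. y \<in> Nset (\<beta>, V) \<and> qmap A Q ((\<beta>, V), y) = qmap A Q ((\<alpha>, U), x))
    \<and> (\<exists>g. homeomorphism (Dset A Q (\<alpha>, U) (\<beta>, V)) (Dset A Q (\<beta>, V) (\<alpha>, U))
              (trans_bar A Q (\<alpha>, U) (\<beta>, V)) g)
    \<and> overlap_img \<alpha> \<beta> \<subseteq> Dset A Q (\<alpha>, U) (\<beta>, V)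
    \<and> (\<forall>x \<in> overlap_img \<alpha> \<beta>. trans_bar A Q (\<alpha>, U) (\<beta>, V) x = transition \<alpha> \<beta> x)
    \<and> (\<forall>x \<in> Nset (\<alpha>, U). \<forall>y \<in> Nset (\<beta>, V).
         ((x \<in> Dset A Q (\<alpha>, U) (\<beta>, V) \<and> trans_bar A Q (\<alpha>, U) (\<beta>, V) x = y)
            \<longleftrightarrow> qmap A Q ((\<alpha>, U), x) = qmap A Q ((\<beta>, V), y))
       \<and> (qmap A Q ((\<alpha>, U), x) = qmap A Q ((\<beta>, V), y) \<longleftrightarrow> ident_cond (\<alpha>, U) x (\<beta>, V) y))"
proof -
  have Q: "charted_completion A Q" using charted_completionI assms(1,2) .
  note st = assms(3,4)
  let ?T = "trans_bar A Q (\<alpha>, U) (\<beta>, V)" and ?D = "Dset A Q (\<alpha>, U) (\<beta>, V)"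
  have \<alpha>: "is_chart \<alpha>" using Q st(1) unfolding charted_completion_def chart_index_def by auto
  have quotient: "qmap A Q ((\<alpha>, U), x) = qmap A Q ((\<beta>, V), y) \<longleftrightarrow> ident_cond (\<alpha>, U) x (\<beta>, V) y"
    if "x \<in> Nset (\<alpha>, U)" "y \<in> Nset (\<beta>, V)" for x y
    using qmap_eq_iff[OF Q st that] .
  have partner: "\<exists>!y. y \<in> Nset (\<beta>, V) \<and> qmap A Q ((\<beta>, V), y) = qmap A Q ((\<alpha>, U), x)"
    if "x \<in> ?D" for x
  proof (rule ex1I)
    have x: "x \<in> Nset (\<alpha>, U)" using that unfolding Dset_def by blast
    have xy: "ident_cond (\<alpha>, U) x (\<beta>, V) (?T x)" using that trans_bar_iff[OF Q st] by blast
    have y: "?T x \<in> Nset (\<beta>, V)" using ident_cond_Nset[OF xy] by blast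
    show "?T x \<in> Nset (\<beta>, V) \<and> qmap A Q ((\<beta>, V), ?T x) = qmap A Q ((\<alpha>, U), x)"
      using y quotient[OF x y] xy by simp
    fix y' assume "y' \<in> Nset (\<beta>, V) \<and> qmap A Q ((\<beta>, V), y') = qmap A Q ((\<alpha>, U), x)"
    then have "ident_cond (\<alpha>, U) x (\<beta>, V) y'" using quotient[OF x, of y'] by simp
    then show "y' = ?T x" using trans_bar_eq[OF Q st] by simp
  qed
  have overlap: "x \<in> ?D \<and> ?T x = transition \<alpha> \<beta> x" if "x \<in> overlap_img \<alpha> \<beta>" for x
  proof -
    have "ident_cond (\<alpha>, U) x (\<beta>, V) (transition \<alpha> \<beta> x)"
      using overlap_same_point[OF \<alpha> that] ident_cond_iff[OF \<alpha>] by blast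
    then show ?thesis using trans_bar_iff[OF Q st, of x "transition \<alpha> \<beta> x"] by blast
  qed
  have homeo: "\<exists>g. homeomorphism ?D (Dset A Q (\<beta>, V) (\<alpha>, U)) ?T g"
    using trans_bar_homeomorphism[OF Q st] by blast
  have "overlap_img \<alpha> \<beta> \<subseteq> ?D" "\<forall>x \<in> overlap_img \<alpha> \<beta>. ?T x = transition \<alpha> \<beta> x"
    using overlap by blast+
  moreover have "\<forall>x \<in> Nset (\<alpha>, U). \<forall>y \<in> Nset (\<beta>, V).
      ((x \<in> ?D \<and> ?T x = y) \<longleftrightarrow> qmap A Q ((\<alpha>, U), x) = qmap A Q ((\<beta>, V), y))
      \<and> (qmap A Q ((\<alpha>, U), x) = qmap A Q ((\<beta>, V), y) \<longleftrightarrow> ident_cond (\<alpha>, U) x (\<beta>, V) y)"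
    using quotient trans_bar_iff[OF Q st] by blast
  ultimately show ?thesis using partner homeo by blast
qed

end
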